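(* Let $A=\{(0,0,0),(0,1,0),(1,0,0),(1,1,0)\}\subset\mathbb{R}^3$ and let $\pi\subset\mathbb{R}^3$ be the plane $x=\tfrac12$. Then the set $\Pi$ of points $M\in\pi\cap\mathbb{Q}^3$ such that the Euclidean distance $|MR|$ is rational for every $R\in A$ is dense in $\pi$ (with the Euclidean topology).
   Context: No further context is needed. *)

theory Defs
  imports "HOL-Analysis.Analysis"
begin

text \<open>Points of R^3 are triples (x,y,z) :: real * real * real; the product topology
on this type coincides with the Euclidean topology (product metric is the max/l2-equivalent one).\<close>

definition setA :: "(real \<times> real \<times> real) set" where
  "setA = {(0,0,0), (0,1,0), (1,0,0), (1,1,0)}"

definition plane_pi :: "(real \<times> real \<times> real) set" where
  "plane_pi = {(x,y,z). x = 1/2}"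

definition edist3 :: "real \<times> real \<times> real \<Rightarrow> real \<times> real \<times> real \<Rightarrow> real" where
  "edist3 p q = (case p of (x1,y1,z1) \<Rightarrow> case q of (x2,y2,z2) \<Rightarrow>
      sqrt ((x1 - x2)^2 + (y1 - y2)^2 + (z1 - z2)^2))"

definition setPi :: "(real \<times> real \<times> real) set" where
  "setPi = {M. M \<in> plane_pi \<and> fst M \<in> \<rat> \<and> fst (snd M) \<in> \<rat> \<and> snd (snd M) \<in> \<rat>
              \<and> (\<forall>R\<in>setA. edist3 M R \<in> \<rat>)}"

end

theory Submission
  imports Defs
begin

text \<open>After scaling by 2, the point \<open>(1/2, Y/2, Z/2)\<close> has rational distances to \<open>A\<close> iff
  \<open>Y\<^sup>2 + Z\<^sup>2 + 1\<close> and \<open>(Y - 2)\<^sup>2 + Z\<^sup>2 + 1\<close> are rational squares. With \<open>c = Z\<^sup>2 + 1\<close>, the first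
  condition \<open>R\<^sup>2 - Y\<^sup>2 = c\<close> is parametrised rationally by \<open>t = R + Y\<close>, via \<open>Y = (t - c/t)/2\<close>, and
  likewise the second by \<open>p = S + Y - 2\<close>. Eliminating \<open>Y\<close> gives \<open>c = m\<^sup>2 t p\<close> with
  \<open>(t - p)(1 + m\<^sup>2) = 4\<close>, and the conic \<open>Z\<^sup>2 + 1 = m\<^sup>2 t (t - 4/(1 + m\<^sup>2))\<close> in \<open>(Z, t)\<close> is
  parametrised rationally by \<open>w = m t - Z\<close>. The resulting rational map \<open>(m, w) \<mapsto> (Y, Z)\<close> sends
  rational parameters into \<open>\<Pi>\<close> and, on the open set where it is defined, onto the whole plane;
  by continuity the image of the dense set \<open>\<rat>\<^sup>2\<close> is dense.\<close>

lemma continuous_image_subset_closure: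
  fixes f :: "'a::first_countable_topology \<Rightarrow> 'b::topological_space"
  assumes "open U" and "continuous_on U f" and "closure D = UNIV" and "f ` (U \<inter> D) \<subseteq> S"
  shows "f ` U \<subseteq> closure S"
proof
  fix y assume "y \<in> f ` U"
  then obtain x where x: "x \<in> U" "y = f x" by blast
  then have "x \<in> closure (U \<inter> D)"
    using open_Int_closure_subset[OF \<open>open U\<close>, of D] \<open>closure D = UNIV\<close> by blast
  then obtain a where a: "\<And>n. a n \<in> U \<inter> D" "a \<longlonglongrightarrow> x"
    unfolding closure_sequential by blast
  have "(\<lambda>n. f (a n)) \<longlonglongrightarrow> f x"
    using continuous_on_tendsto_compose[OF \<open>continuous_on U f\<close> a(2) \<open>x \<in> U\<close>] a(1) by simp
  moreover have "f (a n) \<in> S" for n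
    using a(1) assms(4) by blast
  ultimately show "y \<in> closure S"
    unfolding x(2)
    by (intro Lim_in_closed_set[OF closed_closure _ trivial_limit_sequentially])
      (use closure_subset in \<open>auto intro!: always_eventually\<close>)
qed

lemma scaled_point_in_setPi:
  assumes "Y \<in> \<rat>" "Z \<in> \<rat>"
    and "sqrt (Y\<^sup>2 + Z\<^sup>2 + 1) \<in> \<rat>" "sqrt ((Y - 2)\<^sup>2 + Z\<^sup>2 + 1) \<in> \<rat>"
  shows "(1/2, Y/2, Z/2) \<in> setPi"
proof -
  have half_sqrt: "sqrt ((1/2)\<^sup>2 + (U/2)\<^sup>2 + (Z/2)\<^sup>2) \<in> \<rat>"
    if "sqrt (U\<^sup>2 + Z\<^sup>2 + 1) \<in> \<rat>" for U :: real
  proof -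
    have "sqrt ((1/2)\<^sup>2 + (U/2)\<^sup>2 + (Z/2)\<^sup>2) = sqrt (U\<^sup>2 + Z\<^sup>2 + 1) / 2"
      by (simp add: power_divide real_sqrt_divide flip: add_divide_distrib)
    then show ?thesis
      using that by (simp only: Rats_divide Rats_number_of)
  qed
  have "(Y/2 - 1)\<^sup>2 = ((Y - 2)/2)\<^sup>2" "(1/2 - 1 :: real)\<^sup>2 = (1/2)\<^sup>2"
    by (simp_all add: power2_eq_square field_simps)
  then show ?thesis
    using assms half_sqrt[OF assms(3)] half_sqrt[OF assms(4)]
    by (simp add: setPi_def setA_def plane_pi_def edist3_def)
qed

lemma sum_of_squares_pair:
  fixes t p m :: "'a::field_char_0"
  assumes "(t - p) * (1 + m\<^sup>2) = 4"
  shows "((t - m\<^sup>2 * p) / 2)\<^sup>2 + m\<^sup>2 * t * p = ((t + m\<^sup>2 * p) / 2)\<^sup>2"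
    and "((t - m\<^sup>2 * p) / 2 - 2)\<^sup>2 + m\<^sup>2 * t * p = ((p + m\<^sup>2 * t) / 2)\<^sup>2"
proof -
  show "((t - m\<^sup>2 * p) / 2)\<^sup>2 + m\<^sup>2 * t * p = ((t + m\<^sup>2 * p) / 2)\<^sup>2"
    by (simp add: power2_eq_square field_simps)
  have "(t - m\<^sup>2 * p) / 2 - 2 = (t - m\<^sup>2 * p - 4) / 2"
    by (simp add: field_simps)
  also have "t - m\<^sup>2 * p - 4 = p - m\<^sup>2 * t"
    using assms by (simp add: algebra_simps)
  finally have shifted: "(t - m\<^sup>2 * p) / 2 - 2 = (p - m\<^sup>2 * t) / 2" .
  show "((t - m\<^sup>2 * p) / 2 - 2)\<^sup>2 + m\<^sup>2 * t * p = ((p + m\<^sup>2 * t) / 2)\<^sup>2"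
    unfolding shifted by (simp add: power2_eq_square field_simps)
qed

lemma one_add_square_neq_zero: "1 + x\<^sup>2 \<noteq> (0 :: real)"
  by (smt (verit) zero_le_power2)

definition chord :: "real \<Rightarrow> real" where
  "chord m = 4 / (1 + m\<^sup>2)"

definition param_den :: "real \<Rightarrow> real \<Rightarrow> real" where
  "param_den m w = 2 * m * w - chord m * m\<^sup>2"

definition param_t :: "real \<Rightarrow> real \<Rightarrow> real" where
  "param_t m w = (w\<^sup>2 + 1) / param_den m w"

definition param :: "real \<Rightarrow> real \<Rightarrow> real \<times> real \<times> real" where
  "param m w = (let t = param_t m w in (1/2, (t - m\<^sup>2 * (t - chord m)) / 4, (m * t - w) / 2))"

lemma chord_mult: "chord m * (1 + m\<^sup>2) = 4"
  using one_add_square_neq_zero[of m] by (simp add: chord_def field_simps)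

lemma param_conic:
  assumes "param_den m w \<noteq> 0"
  shows "(m * param_t m w - w)\<^sup>2 + 1 = m\<^sup>2 * param_t m w * (param_t m w - chord m)"
proof -
  have "param_t m w * param_den m w = w\<^sup>2 + 1"
    using assms by (simp add: param_t_def)
  then show ?thesis
    by (simp add: param_den_def power2_eq_square algebra_simps)
qed

lemma param_rational_in_setPi:
  assumes "m \<in> \<rat>" "w \<in> \<rat>" "param_den m w \<noteq> 0"
  shows "param m w \<in> setPi"
proof -
  define t where "t = param_t m w"
  define p where "p = t - chord m"
  define Y where "Y = (t - m\<^sup>2 * p) / 2"
  define Z where "Z = m * t - w"
  have YZ: "param m w = (1/2, Y/2, Z/2)"
    by (simp add: param_def Let_def Y_def Z_def p_def t_def)
  have rat: "t \<in> \<rat>" "p \<in> \<rat>"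
    using assms by (simp_all add: t_def p_def param_t_def param_den_def chord_def)
  have conic: "Z\<^sup>2 + 1 = m\<^sup>2 * t * p"
    using param_conic[OF assms(3)] by (simp add: Z_def t_def p_def)
  have "(t - p) * (1 + m\<^sup>2) = 4"
    using chord_mult by (simp add: p_def)
  from sum_of_squares_pair[OF this]
  have "Y\<^sup>2 + Z\<^sup>2 + 1 = ((t + m\<^sup>2 * p) / 2)\<^sup>2"
    and "(Y - 2)\<^sup>2 + Z\<^sup>2 + 1 = ((p + m\<^sup>2 * t) / 2)\<^sup>2"
    by (simp_all only: Y_def conic add.assoc)
  with rat assms(1,2) have "(1/2, Y/2, Z/2) \<in> setPi"
    by (intro scaled_point_in_setPi) (simp_all add: Y_def Z_def)
  then show ?thesis
    by (simp add: YZ)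
qed

lemma abs_less_sqrt_square_add:
  fixes Y c :: real
  assumes "c > 0"
  shows "\<bar>Y\<bar> < sqrt (Y\<^sup>2 + c)"
proof -
  have "sqrt (Y\<^sup>2) < sqrt (Y\<^sup>2 + c)"
    using assms by (intro real_sqrt_less_mono) simp
  then show ?thesis
    by simp
qed

lemma sqrt_square_add_diff_less:
  fixes Y c :: real
  assumes "c > 0"
  shows "\<bar>sqrt (Y\<^sup>2 + c) - sqrt ((Y - 2)\<^sup>2 + c)\<bar> < 2"
proof -
  define R where "R = sqrt (Y\<^sup>2 + c)"
  define S where "S = sqrt ((Y - 2)\<^sup>2 + c)"
  have R: "R > \<bar>Y\<bar>" and S: "S > \<bar>Y - 2\<bar>"
    unfolding R_def S_def using abs_less_sqrt_square_add[OF assms] by blast+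
  have "R\<^sup>2 = Y\<^sup>2 + c" "S\<^sup>2 = (Y - 2)\<^sup>2 + c"
    unfolding R_def S_def using assms by (intro real_sqrt_pow2; simp)+
  then have "(R - S) * (R + S) = 4 * (Y - 1)"
    by (simp add: power2_eq_square algebra_simps)
  moreover have pos: "R + S > 0"
    using R S abs_ge_zero[of Y] abs_ge_zero[of "Y - 2"] by linarith
  ultimately have "\<bar>R - S\<bar> * (R + S) = 4 * \<bar>Y - 1\<bar>"
    by (metis abs_mult abs_of_pos abs_numeral)
  also have "\<dots> < 2 * (R + S)"
    using R S by (simp add: abs_if split: if_splits)
  finally have "\<bar>R - S\<bar> < 2"
    by (rule mult_right_less_imp_less) (use pos in simp)
  then show ?thesis
    by (simp add: R_def S_def)
qed

lemma exists_hyperbola_parameters: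
  fixes Y c :: real
  assumes "c > 0"
  obtains t p where "t > 0" "p > 0" "t\<^sup>2 - c = 2 * Y * t" "p\<^sup>2 - c = 2 * (Y - 2) * p"
    and "0 < t - p" "t - p < 4"
proof
  define R where "R = sqrt (Y\<^sup>2 + c)"
  define S where "S = sqrt ((Y - 2)\<^sup>2 + c)"
  show "R + Y > 0" "S + (Y - 2) > 0"
    unfolding R_def S_def using abs_less_sqrt_square_add[OF assms] by (smt (verit))+
  have "R\<^sup>2 = Y\<^sup>2 + c" "S\<^sup>2 = (Y - 2)\<^sup>2 + c"
    unfolding R_def S_def using assms by (intro real_sqrt_pow2; simp)+
  then show "(R + Y)\<^sup>2 - c = 2 * Y * (R + Y)" "(S + (Y - 2))\<^sup>2 - c = 2 * (Y - 2) * (S + (Y - 2))"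
    by (simp_all add: power2_eq_square algebra_simps)
  show "0 < R + Y - (S + (Y - 2))" "R + Y - (S + (Y - 2)) < 4"
    using sqrt_square_add_diff_less[OF assms, of Y] unfolding R_def S_def by linarith+
qed

lemma param_of_conic_point:
  assumes "t > 0" and "chord m = t - p" and "Z\<^sup>2 + 1 = m\<^sup>2 * t * p"
  shows "param_den m (m * t - Z) \<noteq> 0"
    and "param m (m * t - Z) = (1/2, (t - m\<^sup>2 * p) / 4, Z / 2)"
proof -
  define w where "w = m * t - Z"
  have "w\<^sup>2 + 1 = m\<^sup>2 * t\<^sup>2 - 2 * m * t * Z + (Z\<^sup>2 + 1)"
    by (simp add: w_def power2_eq_square algebra_simps)
  also have "\<dots> = t * param_den m w"
    unfolding assms(3) param_den_def assms(2) w_def by (simp add: power2_eq_square algebra_simps)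
  finally have den: "t * param_den m w = w\<^sup>2 + 1" ..
  moreover have "w\<^sup>2 + 1 > 0"
    by (simp add: add_nonneg_pos)
  ultimately show "param_den m (m * t - Z) \<noteq> 0"
    unfolding w_def by auto
  then have "param_t m w = t"
    using den by (simp add: param_t_def w_def field_simps)
  then show "param m (m * t - Z) = (1/2, (t - m\<^sup>2 * p) / 4, Z / 2)"
    using assms(2) by (simp add: param_def w_def)
qed

lemma param_surj:
  obtains m w where "param_den m w \<noteq> 0" and "param m w = (1/2, y, z)"
proof -
  define Y where "Y = 2 * y"
  define Z where "Z = 2 * z"
  define c where "c = Z\<^sup>2 + 1"
  have "c > 0"
    by (simp add: c_def add_nonneg_pos)
  then obtain t p where tp: "t > 0" "p > 0" "t\<^sup>2 - c = 2 * Y * t" "p\<^sup>2 - c = 2 * (Y - 2) * p"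
    and d: "0 < t - p" "t - p < 4"
    by (rule exists_hyperbola_parameters)
  define m where "m = sqrt ((4 - (t - p)) / (t - p))"
  have m2: "m\<^sup>2 = (4 - (t - p)) / (t - p)"
    unfolding m_def using d by simp
  have "(t - p) * (1 + m\<^sup>2) = 4"
    using d by (simp add: m2 field_simps)
  then have chord: "chord m = t - p"
    using chord_mult[of m] one_add_square_neq_zero[of m] by (metis mult_right_cancel)
  have "(t\<^sup>2 - c) * p - (p\<^sup>2 - c) * t = 4 * t * p"
    unfolding tp(3,4) by (simp add: algebra_simps)
  then have "c * (t - p) = (4 - (t - p)) * t * p"
    by (simp add: power2_eq_square algebra_simps)
  then have conic: "Z\<^sup>2 + 1 = m\<^sup>2 * t * p"
    using d by (simp add: m2 c_def field_simps)
  have "t * (t - m\<^sup>2 * p) = t\<^sup>2 - c"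
    unfolding c_def conic by (simp add: power2_eq_square algebra_simps)
  also have "\<dots> = t * (2 * Y)"
    using tp(3) by simp
  finally have "(t - m\<^sup>2 * p) / 4 = y"
    using tp(1) by (simp add: Y_def)
  moreover have "Z / 2 = z"
    by (simp add: Z_def)
  ultimately show ?thesis
    using param_of_conic_point[OF tp(1) chord conic] that by metis
qed

theorem theorem3p2:
  shows "setPi \<subseteq> plane_pi \<and> plane_pi \<subseteq> closure setPi"
proof
  show "setPi \<subseteq> plane_pi"
    unfolding setPi_def by auto
  define U where "U = {(m, w). param_den m w \<noteq> 0}"
  have "continuous_on UNIV (\<lambda>(m, w). param_den m w)"
    unfolding param_den_def chord_def
    by (auto intro!: continuous_intros simp: case_prod_unfold one_add_square_neq_zero)
  then have "open U"
    unfolding U_def using open_Collect_neq[of _ "\<lambda>_. 0"] by (simp add: case_prod_unfold)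
  moreover have "continuous_on U (case_prod param)"
    unfolding U_def param_def param_t_def param_den_def chord_def Let_def
    by (auto intro!: continuous_intros simp: case_prod_unfold one_add_square_neq_zero)
  moreover have "closure (\<rat> \<times> \<rat>) = (UNIV :: (real \<times> real) set)"
    by (simp add: closure_Times Rats_closure_real)
  moreover have "case_prod param ` (U \<inter> \<rat> \<times> \<rat>) \<subseteq> setPi"
    unfolding U_def using param_rational_in_setPi by auto
  ultimately have "case_prod param ` U \<subseteq> closure setPi"
    by (rule continuous_image_subset_closure)
  moreover have "plane_pi \<subseteq> case_prod param ` U"
  proof
    fix q assume "q \<in> plane_pi"
    then obtain y z where q: "q = (1/2, y, z)"
      unfolding plane_pi_def by auto
    obtain m w where "param_den m w \<noteq> 0" "param m w = (1/2, y, z)"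
      by (rule param_surj)
    then show "q \<in> case_prod param ` U"
      unfolding q U_def by (auto intro!: image_eqI[of _ _ "(m, w)"])
  qed
  ultimately show "plane_pi \<subseteq> closure setPi"
    by blast
qed

end
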